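(* In the setting of the augmented system below (with $r=m$, $\phi$ of relative degree $\rho$, $\Omega_g$ invertible everywhere, and $\phi_k(t_0,x_0)<0$ for all $k$), let $\beta>0$, $T>t_0$ and let $\xi:[t_0,T]\to\mathbb{R}^r$ be any measurable function. If the augmented system driven by $w(t)=s_\beta(\xi(t))$ has an absolutely continuous solution $(x(t),\tilde z(t))$ on $[t_0,T]$, then $\phi(t,x(t))\le0$ for all $t\in[t_0,T]$; in particular this holds when $\xi$ is the state of an integrator $\dot\xi=\tilde w$ and the original system is driven by $u(t)=-\Omega_g^{-1}(t,x(t))\big(\Omega_f+D(z(t))s_\beta(\xi(t))\big)$.
   Context: Setting: $f,g$ smooth, original system $\dot x=f(t,x)+g(t,x)u$, time-varying Lie derivatives $L_f^0\psi=\psi$, $L_f^j\psi=\frac{\partial L_f^{j-1}\psi}{\partial x}f+\frac{\partial L_f^{j-1}\psi}{\partial t}$, $L_gL_f^j\psi=\frac{\partial L_f^j\psi}{\partial x}g$. Relative degree $\rho$ of $\phi\in C^\infty([t_0,\infty)\times\mathbb{R}^n,\mathbb{R}^r)$: $L_gL_f^i\phi_k\equiv0$ for $i\le\rho_k-2$ and $L_gL_f^{\rho_k-1}\phi_k\ne0$ everywhere. $\Omega_g$ has $k$-th row $L_gL_f^{\rho_k-1}\phi_k$; $S_{k,i-1}=\tfrac12\sum_{j=1}^{i-1}\binom{i}{j}z_k^{(i-j)}z_k^{(j)}$; $\Omega_f$ has $k$-th entry $S_{k,\rho_k-1}+L_f^{\rho_k}\phi_k$; $D(z)=\mathrm{diag}(z_1,\dots,z_r)$.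 Augmented system: state $(x,\tilde z)$, $\tilde z=(z_k^{(j)})_{k\le r,\,0\le j\le\rho_k-1}$, dynamics $\dot x=f+gu$ with $u=-\Omega_g^{-1}(\Omega_f+D(z)w)$, $\frac{d}{dt}z_k^{(j)}=z_k^{(j+1)}$ ($j\le\rho_k-2$), $\frac{d}{dt}z_k^{(\rho_k-1)}=w_k$; initial conditions $x(t_0)=x_0$, $z_k(t_0)=\sqrt{-2\phi_k(t_0,x_0)}$, $z_k^{(i)}(t_0)=-(L_f^i\phi_k(t_0,x_0)+S_{k,i-1}(t_0))/z_k(t_0)$. The saturation $s_\beta:\mathbb{R}^r\to[-\beta,\beta]^r$ acts componentwise as $s_{\beta,i}(\xi)=2\beta\big(\frac{1}{e^{-\xi_i}+1}-\tfrac12\big)$. *)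

theory Defs
  imports "HOL-Analysis.Analysis"
begin

text \<open>For finite-dimensional
spaces this is exactly C-infinity on S (one-sided derivatives at boundary points).\<close>

coinductive smooth_on :: "'a::real_normed_vector set \<Rightarrow> ('a \<Rightarrow> 'b::real_normed_vector) \<Rightarrow> bool"
  where
  "(\<forall>p\<in>S. h differentiable (at p within S)) \<Longrightarrow>
   (\<forall>v. smooth_on S (\<lambda>p. frechet_derivative h (at p within S) v)) \<Longrightarrow> smooth_on S h"

definition dom_set :: "real \<Rightarrow> (real \<times> (real^'n)) set" where
  "dom_set t0 = {t0..} \<times> UNIV"

text \<open>L_f psi = (d psi / dx) f + d psi / dt, i.e. the derivative of (t,x) |-> psi t x in
the direction (1, f t x).\<close>
definition lie_f :: "real \<Rightarrow> (real \<Rightarrow> real^'n \<Rightarrow> real^'n)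
    \<Rightarrow> (real \<Rightarrow> real^'n \<Rightarrow> real) \<Rightarrow> real \<Rightarrow> real^'n \<Rightarrow> real" where
  "lie_f t0 f \<psi> t x =
     frechet_derivative (\<lambda>p. \<psi> (fst p) (snd p)) (at (t, x) within dom_set t0) (1, f t x)"

definition lie_f_iter :: "real \<Rightarrow> (real \<Rightarrow> real^'n \<Rightarrow> real^'n) \<Rightarrow> nat
    \<Rightarrow> (real \<Rightarrow> real^'n \<Rightarrow> real) \<Rightarrow> real \<Rightarrow> real^'n \<Rightarrow> real" where
  "lie_f_iter t0 f j = (lie_f t0 f ^^ j)"

definition lie_g :: "real \<Rightarrow> (real \<Rightarrow> real^'n \<Rightarrow> real^'m^'n)
    \<Rightarrow> (real \<Rightarrow> real^'n \<Rightarrow> real) \<Rightarrow> real \<Rightarrow> real^'n \<Rightarrow> real^'m" where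
  "lie_g t0 g \<psi> t x = (\<chi> i.
     frechet_derivative (\<lambda>p. \<psi> (fst p) (snd p)) (at (t, x) within dom_set t0) (0, column i (g t x)))"

definition comp_fun :: "(real \<Rightarrow> real^'n \<Rightarrow> real^'m) \<Rightarrow> 'm \<Rightarrow> real \<Rightarrow> real^'n \<Rightarrow> real" where
  "comp_fun \<phi> k t x = \<phi> t x $ k"

definition has_relative_degree :: "real \<Rightarrow> (real \<Rightarrow> real^'n \<Rightarrow> real^'n)
    \<Rightarrow> (real \<Rightarrow> real^'n \<Rightarrow> real^'m^'n) \<Rightarrow> (real \<Rightarrow> real^'n \<Rightarrow> real^'m) \<Rightarrow> ('m \<Rightarrow> nat) \<Rightarrow> bool" where
  "has_relative_degree t0 f g \<phi> \<rho> \<longleftrightarrow>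
     (\<forall>k. 1 \<le> \<rho> k
        \<and> (\<forall>i. i + 2 \<le> \<rho> k \<longrightarrow>
              (\<forall>(t, x) \<in> dom_set t0. lie_g t0 g (lie_f_iter t0 f i (comp_fun \<phi> k)) t x = 0))
        \<and> (\<forall>(t, x) \<in> dom_set t0. lie_g t0 g (lie_f_iter t0 f (\<rho> k - 1) (comp_fun \<phi> k)) t x \<noteq> 0))"

text \<open>The augmented state z~ is represented by zt :: 'm => nat => real, with zt k j = z_k^(j);
only the entries j < rho k are meaningful.\<close>

text \<open>S_sum zt k i = S_{k,i-1} = 1/2 * sum_{j=1}^{i-1} (i choose j) z_k^(i-j) z_k^(j)\<close>
definition S_sum :: "('m \<Rightarrow> nat \<Rightarrow> real) \<Rightarrow> 'm \<Rightarrow> nat \<Rightarrow> real" where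
  "S_sum zt k i = (1/2) * (\<Sum>j\<in>{1..i-1}. real (i choose j) * zt k (i - j) * zt k j)"

definition Omega_g :: "real \<Rightarrow> (real \<Rightarrow> real^'n \<Rightarrow> real^'n) \<Rightarrow> (real \<Rightarrow> real^'n \<Rightarrow> real^'m^'n)
    \<Rightarrow> (real \<Rightarrow> real^'n \<Rightarrow> real^'m) \<Rightarrow> ('m \<Rightarrow> nat) \<Rightarrow> real \<Rightarrow> real^'n \<Rightarrow> real^'m^'m" where
  "Omega_g t0 f g \<phi> \<rho> t x =
     (\<chi> k. lie_g t0 g (lie_f_iter t0 f (\<rho> k - 1) (comp_fun \<phi> k)) t x)"

definition Omega_f :: "real \<Rightarrow> (real \<Rightarrow> real^'n \<Rightarrow> real^'n)
    \<Rightarrow> (real \<Rightarrow> real^'n \<Rightarrow> real^'m) \<Rightarrow> ('m \<Rightarrow> nat) \<Rightarrow> real \<Rightarrow> real^'n \<Rightarrow> ('m \<Rightarrow> nat \<Rightarrow> real) \<Rightarrow> real^'m" where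
  "Omega_f t0 f \<phi> \<rho> t x zt =
     (\<chi> k. S_sum zt k (\<rho> k) + lie_f_iter t0 f (\<rho> k) (comp_fun \<phi> k) t x)"

definition D_mult :: "('m \<Rightarrow> nat \<Rightarrow> real) \<Rightarrow> real^'m \<Rightarrow> real^'m" where
  "D_mult zt w = (\<chi> k. zt k 0 * w $ k)"

definition aug_control :: "real \<Rightarrow> (real \<Rightarrow> real^'n \<Rightarrow> real^'n) \<Rightarrow> (real \<Rightarrow> real^'n \<Rightarrow> real^'m^'n)
    \<Rightarrow> (real \<Rightarrow> real^'n \<Rightarrow> real^'m) \<Rightarrow> ('m \<Rightarrow> nat) \<Rightarrow> real \<Rightarrow> real^'n \<Rightarrow> ('m \<Rightarrow> nat \<Rightarrow> real)
    \<Rightarrow> real^'m \<Rightarrow> real^'m" where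
  "aug_control t0 f g \<phi> \<rho> t x zt w =
     - (matrix_inv (Omega_g t0 f g \<phi> \<rho> t x) *v (Omega_f t0 f \<phi> \<rho> t x zt + D_mult zt w))"

definition sat :: "real \<Rightarrow> real^'m \<Rightarrow> real^'m" where
  "sat \<beta> \<xi> = (\<chi> i. 2 * \<beta> * (1 / (exp (- (\<xi> $ i)) + 1) - 1/2))"

definition abs_continuous_on :: "real set \<Rightarrow> (real \<Rightarrow> 'a::real_normed_vector) \<Rightarrow> bool" where
  "abs_continuous_on I h \<longleftrightarrow>
     (\<forall>\<epsilon>>0. \<exists>\<delta>>0. \<forall>D. finite D
        \<and> (\<forall>(a, b) \<in> D. a \<le> b \<and> {a..b} \<subseteq> I)
        \<and> pairwise (\<lambda>(a, b) (c, d). {a<..<b} \<inter> {c<..<d} = {}) D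
        \<and> (\<Sum>(a, b)\<in>D. b - a) < \<delta>
        \<longrightarrow> (\<Sum>(a, b)\<in>D. norm (h b - h a)) < \<epsilon>)"

definition aug_solution :: "real \<Rightarrow> real \<Rightarrow> (real \<Rightarrow> real^'n \<Rightarrow> real^'n) \<Rightarrow> (real \<Rightarrow> real^'n \<Rightarrow> real^'m^'n)
    \<Rightarrow> (real \<Rightarrow> real^'n \<Rightarrow> real^'m) \<Rightarrow> ('m \<Rightarrow> nat) \<Rightarrow> real^'n \<Rightarrow> (real \<Rightarrow> real^'m)
    \<Rightarrow> (real \<Rightarrow> real^'n) \<Rightarrow> (real \<Rightarrow> 'm \<Rightarrow> nat \<Rightarrow> real) \<Rightarrow> bool" where
  "aug_solution t0 T f g \<phi> \<rho> x0 w x zt \<longleftrightarrow>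
     abs_continuous_on {t0..T} x
     \<and> (\<forall>k j. j < \<rho> k \<longrightarrow> abs_continuous_on {t0..T} (\<lambda>t. zt t k j))
     \<and> (AE t in lebesgue. t \<in> {t0..T} \<longrightarrow>
          (x has_vector_derivative
             (f t (x t) + g t (x t) *v aug_control t0 f g \<phi> \<rho> t (x t) (zt t) (w t)))
             (at t within {t0..T}))
     \<and> (\<forall>k j. j + 1 < \<rho> k \<longrightarrow> (AE t in lebesgue. t \<in> {t0..T} \<longrightarrow>
          ((\<lambda>s. zt s k j) has_vector_derivative zt t k (j + 1)) (at t within {t0..T})))
     \<and> (\<forall>k. AE t in lebesgue. t \<in> {t0..T} \<longrightarrow>
          ((\<lambda>s. zt s k (\<rho> k - 1)) has_vector_derivative w t $ k) (at t within {t0..T}))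
     \<and> x t0 = x0
     \<and> (\<forall>k. zt t0 k 0 = sqrt (- 2 * \<phi> t0 x0 $ k))
     \<and> (\<forall>k i. 1 \<le> i \<and> i < \<rho> k \<longrightarrow>
          zt t0 k i = - (lie_f_iter t0 f i (comp_fun \<phi> k) t0 x0 + S_sum (zt t0) k i) / zt t0 k 0)"

end

theory Submission
  imports Defs
begin

(* Fix a component k and put r = rho_k.  Along a solution,
     Q_i(t) = L_f^i phi_k(t, x(t)) + 1/2 * sum_{j <= i} (i choose j) z_k^(i-j)(t) z_k^(j)(t)
   is the i-th time derivative of phi_k + z_k^2 / 2.  The initial conditions of the augmented
   system make every Q_i vanish at t0.  The relative degree gives Q_i' = Q_(i+1) for i < r - 1,
   and the feedback u is chosen so that Q_(r-1)' = 0 almost everywhere, whatever the input w.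
   An absolutely continuous function whose derivative vanishes almost everywhere is constant
   (by Lusin's property (N)), so downward induction gives Q_0 = 0 on [t0, T], i.e.
   phi_k(t, x(t)) = - z_k(t)^2 / 2 <= 0. *)

section \<open>Absolutely continuous functions\<close>

definition nonoverlapping_intervals_in :: "real set \<Rightarrow> (real \<times> real) set \<Rightarrow> bool" where
  "nonoverlapping_intervals_in I D \<longleftrightarrow> finite D \<and> (\<forall>(a, b) \<in> D. a \<le> b \<and> {a..b} \<subseteq> I)
     \<and> pairwise (\<lambda>(a, b) (c, d). {a<..<b} \<inter> {c<..<d} = {}) D"

lemma abs_continuous_on_iff:
  "abs_continuous_on I h \<longleftrightarrow>
     (\<forall>\<epsilon>>0. \<exists>\<delta>>0. \<forall>D. nonoverlapping_intervals_in I D \<and> (\<Sum>(a, b)\<in>D. b - a) < \<delta>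
        \<longrightarrow> (\<Sum>(a, b)\<in>D. norm (h b - h a)) < \<epsilon>)"
  by (simp add: abs_continuous_on_def nonoverlapping_intervals_in_def conj_assoc)

lemma abs_continuous_onE:
  assumes "abs_continuous_on I h" "\<epsilon> > 0"
  obtains \<delta> where "\<delta> > 0"
    "\<And>D. nonoverlapping_intervals_in I D \<Longrightarrow> (\<Sum>(a, b)\<in>D. b - a) < \<delta>
       \<Longrightarrow> (\<Sum>(a, b)\<in>D. norm (h b - h a)) < \<epsilon>"
  using assms unfolding abs_continuous_on_iff by meson

lemma abs_continuous_onI:
  assumes "\<And>\<epsilon>. \<epsilon> > 0 \<Longrightarrow> \<exists>\<delta>>0. \<forall>D. nonoverlapping_intervals_in I D \<longrightarrow> (\<Sum>(a, b)\<in>D. b - a) < \<delta>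
             \<longrightarrow> (\<Sum>(a, b)\<in>D. norm (h b - h a)) < \<epsilon>"
  shows "abs_continuous_on I h"
  using assms unfolding abs_continuous_on_iff by blast

lemma abs_continuous_on_imp_continuous_on:
  assumes "abs_continuous_on {a..b} h"
  shows "continuous_on {a..b} h"
  unfolding continuous_on_iff
proof (intro ballI allI impI)
  fix x \<epsilon> :: real assume x: "x \<in> {a..b}" and "\<epsilon> > 0"
  obtain \<delta> where "\<delta> > 0" and small: "\<And>D. nonoverlapping_intervals_in {a..b} D
      \<Longrightarrow> (\<Sum>(a, b)\<in>D. b - a) < \<delta> \<Longrightarrow> (\<Sum>(a, b)\<in>D. norm (h b - h a)) < \<epsilon>"
    using abs_continuous_onE[OF assms \<open>\<epsilon> > 0\<close>] by blast
  have "dist (h y) (h x) < \<epsilon>" if "y \<in> {a..b}" "dist y x < \<delta>" for y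
  proof -
    have "(\<Sum>(a, b)\<in>{(min x y, max x y)}. norm (h b - h a)) < \<epsilon>"
      by (rule small) (use x that in \<open>auto simp: nonoverlapping_intervals_in_def dist_real_def\<close>)
    then show ?thesis
      by (cases "x \<le> y") (auto simp: dist_norm norm_minus_commute min_def max_def)
  qed
  then show "\<exists>\<delta>>0. \<forall>y\<in>{a..b}. dist y x < \<delta> \<longrightarrow> dist (h y) (h x) < \<epsilon>"
    using \<open>\<delta> > 0\<close> by blast
qed

lemma abs_continuous_on_dominated:
  fixes y1 :: "real \<Rightarrow> 'a::real_normed_vector" and y2 :: "real \<Rightarrow> 'b::real_normed_vector"
    and G :: "real \<Rightarrow> 'c::real_normed_vector"
  assumes y1: "abs_continuous_on I y1" and y2: "abs_continuous_on I y2" and "L \<ge> 0"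
    and dominated: "\<And>s t. s \<in> I \<Longrightarrow> t \<in> I \<Longrightarrow>
      norm (G s - G t) \<le> L * (norm (y1 s - y1 t) + norm (y2 s - y2 t))"
  shows "abs_continuous_on I G"
proof (rule abs_continuous_onI)
  fix \<epsilon> :: real assume "\<epsilon> > 0"
  define \<epsilon>' where "\<epsilon>' = \<epsilon> / (2 * (L + 1))"
  have "\<epsilon>' > 0" using \<open>\<epsilon> > 0\<close> \<open>L \<ge> 0\<close> by (simp add: \<epsilon>'_def)
  obtain \<delta>1 where "\<delta>1 > 0" and small1: "\<And>D. nonoverlapping_intervals_in I D
      \<Longrightarrow> (\<Sum>(a, b)\<in>D. b - a) < \<delta>1 \<Longrightarrow> (\<Sum>(a, b)\<in>D. norm (y1 b - y1 a)) < \<epsilon>'"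
    using abs_continuous_onE[OF y1 \<open>\<epsilon>' > 0\<close>] by blast
  obtain \<delta>2 where "\<delta>2 > 0" and small2: "\<And>D. nonoverlapping_intervals_in I D
      \<Longrightarrow> (\<Sum>(a, b)\<in>D. b - a) < \<delta>2 \<Longrightarrow> (\<Sum>(a, b)\<in>D. norm (y2 b - y2 a)) < \<epsilon>'"
    using abs_continuous_onE[OF y2 \<open>\<epsilon>' > 0\<close>] by blast
  have "(\<Sum>(a, b)\<in>D. norm (G b - G a)) < \<epsilon>"
    if D: "nonoverlapping_intervals_in I D" "(\<Sum>(a, b)\<in>D. b - a) < min \<delta>1 \<delta>2" for D
  proof -
    have "(\<Sum>(a, b)\<in>D. norm (G b - G a)) \<le> (\<Sum>(a, b)\<in>D. L * (norm (y1 b - y1 a) + norm (y2 b - y2 a)))"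
    proof (rule sum_mono, clarify)
      fix a b assume "(a, b) \<in> D"
      then have "a \<le> b" "{a..b} \<subseteq> I"
        using D(1) by (auto simp: nonoverlapping_intervals_in_def)
      then show "norm (G b - G a) \<le> L * (norm (y1 b - y1 a) + norm (y2 b - y2 a))"
        by (intro dominated) auto
    qed
    also have "\<dots> = L * ((\<Sum>(a, b)\<in>D. norm (y1 b - y1 a)) + (\<Sum>(a, b)\<in>D. norm (y2 b - y2 a)))"
      by (simp add: sum_distrib_left sum.distrib case_prod_unfold distrib_left)
    also have "\<dots> \<le> L * (2 * \<epsilon>')"
      using small1[OF D(1)] small2[OF D(1)] D(2) \<open>L \<ge> 0\<close> by (intro mult_left_mono) auto
    also have "\<dots> < \<epsilon>"
      using \<open>\<epsilon> > 0\<close> \<open>L \<ge> 0\<close> by (simp add: \<epsilon>'_def field_simps)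
    finally show ?thesis .
  qed
  then show "\<exists>\<delta>>0. \<forall>D. nonoverlapping_intervals_in I D \<longrightarrow> (\<Sum>(a, b)\<in>D. b - a) < \<delta>
      \<longrightarrow> (\<Sum>(a, b)\<in>D. norm (G b - G a)) < \<epsilon>"
    using \<open>\<delta>1 > 0\<close> \<open>\<delta>2 > 0\<close> by (intro exI[of _ "min \<delta>1 \<delta>2"]) auto
qed

lemma abs_continuous_on_const: "abs_continuous_on I (\<lambda>_. c)"
  by (rule abs_continuous_onI) auto

lemma abs_continuous_on_ident: "abs_continuous_on I (\<lambda>t. t)"
proof (rule abs_continuous_onI)
  fix \<epsilon> :: real assume "\<epsilon> > 0"
  have "(\<Sum>(a, b)\<in>D. norm (b - a)) = (\<Sum>(a, b)\<in>D. b - a)" if "nonoverlapping_intervals_in I D" for D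
    using that by (intro sum.cong) (auto simp: nonoverlapping_intervals_in_def)
  then show "\<exists>\<delta>>0. \<forall>D. nonoverlapping_intervals_in I D \<longrightarrow> (\<Sum>(a, b)\<in>D. b - a) < \<delta>
      \<longrightarrow> (\<Sum>(a, b)\<in>D. norm (b - a)) < \<epsilon>"
    using \<open>\<epsilon> > 0\<close> by (intro exI[of _ \<epsilon>]) auto
qed

lemma abs_continuous_on_add:
  fixes f g :: "real \<Rightarrow> 'a::real_normed_vector"
  assumes "abs_continuous_on I f" "abs_continuous_on I g"
  shows "abs_continuous_on I (\<lambda>t. f t + g t)"
proof (rule abs_continuous_on_dominated[OF assms, where L = 1])
  fix s t
  have "f s + g s - (f t + g t) = (f s - f t) + (g s - g t)" by simp
  then show "norm (f s + g s - (f t + g t)) \<le> 1 * (norm (f s - f t) + norm (g s - g t))"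
    by (metis mult_1 norm_triangle_ineq)
qed simp

lemma abs_continuous_on_sum:
  fixes f :: "'i \<Rightarrow> real \<Rightarrow> 'a::real_normed_vector"
  assumes "\<And>i. i \<in> A \<Longrightarrow> abs_continuous_on I (f i)"
  shows "abs_continuous_on I (\<lambda>t. \<Sum>i\<in>A. f i t)"
  using assms
  by (induction A rule: infinite_finite_induct) (simp_all add: abs_continuous_on_const abs_continuous_on_add)

lemma abs_continuous_on_bounded:
  fixes h :: "real \<Rightarrow> 'a::real_normed_vector"
  assumes "abs_continuous_on {a..b} h"
  obtains M where "M > 0" "\<And>t. t \<in> {a..b} \<Longrightarrow> norm (h t) \<le> M"
proof -
  have "compact (h ` {a..b})"
    by (rule compact_continuous_image[OF abs_continuous_on_imp_continuous_on[OF assms]]) simp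
  then show ?thesis
    using that compact_imp_bounded bounded_pos by (metis image_eqI)
qed

lemma abs_continuous_on_mult:
  fixes f g :: "real \<Rightarrow> real"
  assumes f: "abs_continuous_on {a..b} f" and g: "abs_continuous_on {a..b} g"
  shows "abs_continuous_on {a..b} (\<lambda>t. f t * g t)"
proof -
  obtain M1 where "M1 > 0" and M1: "\<And>t. t \<in> {a..b} \<Longrightarrow> \<bar>f t\<bar> \<le> M1"
    using abs_continuous_on_bounded[OF f] by auto
  obtain M2 where "M2 > 0" and M2: "\<And>t. t \<in> {a..b} \<Longrightarrow> \<bar>g t\<bar> \<le> M2"
    using abs_continuous_on_bounded[OF g] by auto
  show ?thesis
  proof (rule abs_continuous_on_dominated[OF f g, where L = "M1 + M2"])
    fix s t assume "s \<in> {a..b}" "t \<in> {a..b}"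
    have "f s * g s - f t * g t = f s * (g s - g t) + g t * (f s - f t)"
      by (simp add: algebra_simps)
    then have "\<bar>f s * g s - f t * g t\<bar> \<le> \<bar>f s\<bar> * \<bar>g s - g t\<bar> + \<bar>g t\<bar> * \<bar>f s - f t\<bar>"
      by (metis abs_mult abs_triangle_ineq)
    also have "\<dots> \<le> M1 * \<bar>g s - g t\<bar> + M2 * \<bar>f s - f t\<bar>"
      using M1 M2 \<open>s \<in> {a..b}\<close> \<open>t \<in> {a..b}\<close> by (intro add_mono mult_right_mono) auto
    also have "\<dots> \<le> (M1 + M2) * (\<bar>f s - f t\<bar> + \<bar>g s - g t\<bar>)"
      using \<open>M1 > 0\<close> \<open>M2 > 0\<close> by (simp add: algebra_simps)
    finally show "norm (f s * g s - f t * g t) \<le> (M1 + M2) * (norm (f s - f t) + norm (g s - g t))"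
      by simp
  qed (use \<open>M1 > 0\<close> \<open>M2 > 0\<close> in simp)
qed

lemma closure_component_interval_subset:
  fixes C :: "real set"
  assumes "C \<in> components U" "open U" "s \<in> closure C" "t \<in> closure C"
  shows "{min s t<..<max s t} \<subseteq> C"
proof -
  have "open C" using assms(1,2) open_components by blast
  have "convex C"
    using assms(1) in_components_connected is_interval_connected_1 is_interval_convex_1 by blast
  then have "closed_segment s t \<subseteq> closure C"
    using assms(3,4) convex_closure closed_segment_subset by blast
  then have "{min s t<..<max s t} \<subseteq> closure C"
    by (auto simp: closed_segment_eq_real_ivl min_def max_def split: if_splits)
  then have "{min s t<..<max s t} \<subseteq> interior (closure C)"
    by (intro interior_maximal) auto
  also have "\<dots> = C"
    using convex_interior_closure[OF \<open>convex C\<close>] interior_open[OF \<open>open C\<close>] by simp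
  finally show ?thesis .
qed

lemma negligible_open_superset:
  assumes "negligible E" "\<delta> > 0"
  obtains U where "open U" "E \<subseteq> U" "U \<in> lmeasurable" "measure lebesgue U < \<delta>"
proof -
  have E: "E \<in> null_sets lebesgue" using assms(1) negligible_iff_null_sets by blast
  then obtain U where U: "open U" "E \<subseteq> U" "U - E \<in> lmeasurable" "measure lebesgue (U - E) < \<delta>"
    using sets_lebesgue_outer_open[of E \<delta>] assms(2)
    by (metis emeasure_eq_measure2 ennreal_leI linorder_not_le null_setsD2)
  have "U = (U - E) \<union> E" using U(2) by blast
  then have "U \<in> lmeasurable"
    using U(3) E by (metis fmeasurableI_null_sets fmeasurable.Un)
  moreover have "measure lebesgue U < \<delta>"
    using U(4) E \<open>U \<in> lmeasurable\<close> by (simp add: measure_Diff_null_set fmeasurableD)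
  ultimately show ?thesis using that U(1,2) by blast
qed

lemma sum_interval_lengths_le_measure:
  assumes "finite D" "pairwise (\<lambda>(a, b) (c, d). {a<..<b} \<inter> {c<..<d} = {}) D"
    and "\<And>a b. (a, b) \<in> D \<Longrightarrow> a \<le> b \<and> {a<..<b} \<subseteq> U" and "U \<in> lmeasurable"
  shows "(\<Sum>(a, b)\<in>D. b - a) \<le> measure lebesgue U"
proof -
  have "(\<Sum>(a, b)\<in>D. b - a) = (\<Sum>p\<in>D. measure lebesgue {fst p<..<snd p})"
    using assms(3) by (intro sum.cong) auto
  also have "\<dots> = measure lebesgue (\<Union>p\<in>D. {fst p<..<snd p})"
    using assms(2) by (intro measure_UNION'[symmetric] \<open>finite D\<close>)
       (auto simp: pairwise_def disjnt_def case_prod_unfold)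
  also have "\<dots> \<le> measure lebesgue U"
    using assms(1,3,4) by (intro measure_mono_fmeasurable) (force simp: fmeasurableD)+
  finally show ?thesis .
qed

lemma sum_components_variation_less:
  fixes h :: "real \<Rightarrow> real"
  assumes small: "\<And>D. nonoverlapping_intervals_in {a..b} D \<Longrightarrow> (\<Sum>(a, b)\<in>D. b - a) < \<delta>
      \<Longrightarrow> (\<Sum>(a, b)\<in>D. norm (h b - h a)) < \<epsilon>"
    and U: "open U" "U \<in> lmeasurable" "measure lebesgue U < \<delta>"
    and F: "finite F" "F \<subseteq> components U"
    and st: "\<And>C. C \<in> F \<Longrightarrow> s C \<in> closure C \<inter> {a..b} \<and> t C \<in> closure C \<inter> {a..b}"
  shows "(\<Sum>C\<in>F. \<bar>h (t C) - h (s C)\<bar>) < \<epsilon>"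
proof -
  define lo where "lo C = min (s C) (t C)" for C
  define hi where "hi C = max (s C) (t C)" for C
  define F' where "F' = {C \<in> F. s C \<noteq> t C}"
  define D where "D = (\<lambda>C. (lo C, hi C)) ` F'"
  have "finite F'" "F' \<subseteq> F" using F(1) by (auto simp: F'_def)
  have ivl_sub: "{lo C<..<hi C} \<subseteq> C" if "C \<in> F" for C
    using closure_component_interval_subset[of C U "s C" "t C"] st[OF that] F(2) that U(1)
    by (auto simp: lo_def hi_def)
  have ivl_disj: "{lo C1<..<hi C1} \<inter> {lo C2<..<hi C2} = {}"
    if "C1 \<in> F'" "C2 \<in> F'" "C1 \<noteq> C2" for C1 C2
  proof -
    have "C1 \<inter> C2 = {}"
      using pairwise_disjoint_components[of U] that F(2) \<open>F' \<subseteq> F\<close> unfolding pairwise_def by blast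
    then show ?thesis
      using ivl_sub that \<open>F' \<subseteq> F\<close> by blast
  qed
  have inj: "inj_on (\<lambda>C. (lo C, hi C)) F'"
  proof (rule inj_onI, rule ccontr)
    fix C1 C2 assume "C1 \<in> F'" "C2 \<in> F'" "(lo C1, hi C1) = (lo C2, hi C2)" "C1 \<noteq> C2"
    moreover have "lo C1 < hi C1"
      using \<open>C1 \<in> F'\<close> by (auto simp: F'_def lo_def hi_def)
    ultimately show False
      using ivl_disj[of C1 C2] by auto
  qed
  have D: "nonoverlapping_intervals_in {a..b} D"
    unfolding nonoverlapping_intervals_in_def
  proof (intro conjI)
    show "finite D" using \<open>finite F'\<close> by (simp add: D_def)
    show "\<forall>(x, y)\<in>D. x \<le> y \<and> {x..y} \<subseteq> {a..b}"
      using st \<open>F' \<subseteq> F\<close> by (fastforce simp: D_def lo_def hi_def)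
    show "pairwise (\<lambda>(a, b) (c, d). {a<..<b} \<inter> {c<..<d} = {}) D"
      using ivl_disj by (fastforce simp: D_def pairwise_def)
  qed
  moreover have "(\<Sum>(a, b)\<in>D. b - a) < \<delta>"
  proof (rule le_less_trans[OF sum_interval_lengths_le_measure U(3)])
    show "a' \<le> b' \<and> {a'<..<b'} \<subseteq> U" if ab: "(a', b') \<in> D" for a' b'
    proof -
      obtain C where C: "C \<in> F'" "a' = lo C" "b' = hi C"
        using ab by (auto simp: D_def)
      then have "{a'<..<b'} \<subseteq> C" "C \<subseteq> U"
        using ivl_sub \<open>F' \<subseteq> F\<close> F(2) in_components_subset by blast+
      moreover have "a' \<le> b'"
        using C by (simp add: lo_def hi_def)
      ultimately show ?thesis
        by blast
    qed
  qed (use D U(2) in \<open>auto simp: nonoverlapping_intervals_in_def\<close>)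
  ultimately have "(\<Sum>(a, b)\<in>D. norm (h b - h a)) < \<epsilon>"
    by (rule small)
  moreover have "(\<Sum>(a, b)\<in>D. norm (h b - h a)) = (\<Sum>C\<in>F'. norm (h (hi C) - h (lo C)))"
    unfolding D_def by (simp add: sum.reindex[OF inj])
  moreover have "\<dots> = (\<Sum>C\<in>F'. \<bar>h (t C) - h (s C)\<bar>)"
    by (intro sum.cong) (auto simp: lo_def hi_def min_def max_def abs_minus_commute)
  moreover have "\<dots> = (\<Sum>C\<in>F. \<bar>h (t C) - h (s C)\<bar>)"
    by (rule sum.mono_neutral_left) (auto simp: F'_def F(1))
  ultimately show ?thesis by simp
qed

lemma abs_continuous_image_Int_open_measure_le:
  fixes h :: "real \<Rightarrow> real"
  assumes small: "\<And>D. nonoverlapping_intervals_in {a..b} D \<Longrightarrow> (\<Sum>(a, b)\<in>D. b - a) < \<delta>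
      \<Longrightarrow> (\<Sum>(a, b)\<in>D. norm (h b - h a)) < \<epsilon>"
    and cont: "continuous_on {a..b} h"
    and U: "open U" "U \<in> lmeasurable" "measure lebesgue U < \<delta>"
  shows "\<exists>T. h ` (U \<inter> {a..b}) \<subseteq> T \<and> T \<in> lmeasurable \<and> measure lebesgue T \<le> \<epsilon>"
proof -
  define CC where "CC = {C \<in> components U. C \<inter> {a..b} \<noteq> {}}"
  define K where "K C = closure C \<inter> {a..b}" for C
  have "compact (K C)" for C
    unfolding K_def by (simp add: compact_Int_closed[of "{a..b}", simplified Int_commute])
  moreover have "K C \<noteq> {}" if "C \<in> CC" for C
    using that closure_subset by (auto simp: CC_def K_def)
  moreover have "continuous_on (K C) h" for C
    using cont continuous_on_subset by (force simp: K_def)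
  ultimately have "\<forall>C\<in>CC. \<exists>st. fst st \<in> K C \<and> snd st \<in> K C
      \<and> (\<forall>y\<in>K C. h (fst st) \<le> h y \<and> h y \<le> h (snd st))"
    by (metis continuous_attains_inf continuous_attains_sup fst_conv snd_conv)
  then obtain st where st: "\<And>C. C \<in> CC \<Longrightarrow> fst (st C) \<in> K C \<and> snd (st C) \<in> K C
      \<and> (\<forall>y\<in>K C. h (fst (st C)) \<le> h y \<and> h y \<le> h (snd (st C)))"
    by metis
  define J where "J C = {h (fst (st C)) .. h (snd (st C))}" for C
  have "countable (components U)"
  proof (rule countable_disjoint_open_subsets)
    show "open C" if "C \<in> components U" for C
      using that U(1) open_components by blast
    show "disjoint (components U)"
      using pairwise_disjoint_components[of U] unfolding disjnt_def by simp
  qed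
  then have "countable CC"
    by (rule countable_subset[rotated]) (auto simp: CC_def)
  have bound: "measure lebesgue (\<Union>C\<in>F. J C) \<le> \<epsilon>" if "F \<subseteq> CC" "finite F" for F
  proof -
    have "measure lebesgue (\<Union>C\<in>F. J C) \<le> (\<Sum>C\<in>F. measure lebesgue (J C))"
      using that by (intro measure_UNION_le) (auto simp: J_def)
    also have "\<dots> = (\<Sum>C\<in>F. \<bar>h (snd (st C)) - h (fst (st C))\<bar>)"
      using st that by (intro sum.cong) (auto simp: J_def)
    also have "\<dots> < \<epsilon>"
      by (rule sum_components_variation_less[OF small U that(2)])
         (use that st in \<open>auto simp: CC_def K_def\<close>)
    finally show ?thesis by simp
  qed
  have "h ` (U \<inter> {a..b}) \<subseteq> (\<Union>C\<in>CC. J C)"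
  proof
    fix y assume "y \<in> h ` (U \<inter> {a..b})"
    then obtain x where "x \<in> U" "x \<in> {a..b}" "y = h x" by auto
    define C where "C = connected_component_set U x"
    have "x \<in> C" "C \<in> components U"
      using \<open>x \<in> U\<close> by (simp_all add: C_def componentsI)
    then have "C \<in> CC" "x \<in> K C"
      using \<open>x \<in> {a..b}\<close> closure_subset by (auto simp: CC_def K_def)
    then show "y \<in> (\<Union>C\<in>CC. J C)"
      using st \<open>y = h x\<close> by (auto simp: J_def)
  qed
  moreover have "(\<Union>C\<in>CC. J C) \<in> lmeasurable"
    by (rule fmeasurable_UN_bound[OF \<open>countable CC\<close> _ bound]) (auto simp: J_def)
  moreover have "measure lebesgue (\<Union>C\<in>CC. J C) \<le> \<epsilon>"
    by (rule measure_UN_bound[OF \<open>countable CC\<close> _ bound]) (auto simp: J_def)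
  ultimately show ?thesis
    by blast
qed

lemma abs_continuous_on_negligible_image:
  fixes h :: "real \<Rightarrow> real"
  assumes ac: "abs_continuous_on {a..b} h" and E: "E \<subseteq> {a..b}" "negligible E"
  shows "negligible (h ` E)"
  unfolding negligible_outer_le
proof (intro allI impI)
  fix \<epsilon> :: real assume "\<epsilon> > 0"
  obtain \<delta> where "\<delta> > 0" and small: "\<And>D. nonoverlapping_intervals_in {a..b} D
      \<Longrightarrow> (\<Sum>(a, b)\<in>D. b - a) < \<delta> \<Longrightarrow> (\<Sum>(a, b)\<in>D. norm (h b - h a)) < \<epsilon>"
    using abs_continuous_onE[OF ac \<open>\<epsilon> > 0\<close>] by blast
  obtain U where U: "open U" "E \<subseteq> U" "U \<in> lmeasurable" "measure lebesgue U < \<delta>"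
    using negligible_open_superset[OF E(2) \<open>\<delta> > 0\<close>] by blast
  have "h ` E \<subseteq> h ` (U \<inter> {a..b})"
    using E(1) U(2) by blast
  with abs_continuous_image_Int_open_measure_le[OF small abs_continuous_on_imp_continuous_on[OF ac] U(1,3,4)]
  show "\<exists>T. h ` E \<subseteq> T \<and> T \<in> lmeasurable \<and> measure lebesgue T \<le> \<epsilon>"
    by (meson order_trans)
qed

lemma negligible_image_zero_derivative:
  fixes h :: "real \<Rightarrow> real"
  assumes "\<And>t. t \<in> S \<Longrightarrow> (h has_vector_derivative 0) (at t within S)"
  shows "negligible (h ` S)"
proof -
  \<comment> \<open>Transfer to \<open>real^1\<close>, where Sard's lemma is available.\<close>
  let ?H = "\<lambda>v::real^1. (vec (h (v$1)) :: real^1)"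
  have "negligible (?H ` (vec ` S))"
  proof (rule baby_Sard[where f' = "\<lambda>_ _. 0"])
    fix v :: "real^1" assume "v \<in> vec ` S"
    then obtain t where t: "t \<in> S" "v = vec t" by auto
    have proj: "((\<lambda>v::real^1. v$1) has_derivative (\<lambda>v. v$1)) (at v within vec ` S)"
      by (simp add: bounded_linear_vec_nth bounded_linear_imp_has_derivative)
    have comp: "((\<lambda>v::real^1. h (v$1)) has_derivative (\<lambda>_. 0)) (at v within vec ` S)"
      by (rule has_derivative_in_compose2[of S h "\<lambda>_ _. 0", OF _ _ _ proj])
         (use assms t in \<open>auto simp: has_vector_derivative_def image_image\<close>)
    have "bounded_linear (vec :: real \<Rightarrow> real^1)"
      using linear_linear linear_vec by blast
    from bounded_linear.has_derivative[OF this comp]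
    show "(?H has_derivative (\<lambda>_. 0)) (at v within vec ` S)"
      by simp
  qed (auto simp: matrix_def rank_eq_0 vec_eq_iff)
  then have "negligible (vec ` (h ` S) :: (real^1) set)"
    by (simp add: image_image)
  then have "negligible ((\<lambda>v::real^1. v$1) ` (vec ` (h ` S)))"
    by (rule negligible_differentiable_image_negligible[rotated])
       (auto intro!: bounded_linear_imp_differentiable_on)
  then show ?thesis by (simp add: image_image)
qed

lemma abs_continuous_on_AE_deriv_zero_constant:
  fixes h :: "real \<Rightarrow> real"
  assumes ac: "abs_continuous_on {a..b} h"
    and deriv: "AE t in lebesgue. t \<in> {a..b} \<longrightarrow> (h has_vector_derivative 0) (at t within {a..b})"
    and c: "c \<in> {a..b}"
  shows "h c = h a"
proof -
  obtain N where N: "N \<in> null_sets lebesgue"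
    and deriv_off_N: "\<And>t. t \<in> space lebesgue - N \<Longrightarrow>
      t \<in> {a..b} \<longrightarrow> (h has_vector_derivative 0) (at t within {a..b})"
    using AE_E3[OF deriv] by metis
  have "negligible (h ` ({a..b} - N))"
  proof (rule negligible_image_zero_derivative)
    fix t assume "t \<in> {a..b} - N"
    then have "(h has_vector_derivative 0) (at t within {a..b})"
      using deriv_off_N by simp
    then show "(h has_vector_derivative 0) (at t within {a..b} - N)"
      by (rule has_vector_derivative_within_subset) auto
  qed
  moreover have "negligible (h ` ({a..b} \<inter> N))"
    using N negligible_subset[OF _ Int_lower2]
    by (intro abs_continuous_on_negligible_image[OF ac]) (auto simp: negligible_iff_null_sets)
  moreover have "h ` {a..b} = h ` ({a..b} - N) \<union> h ` ({a..b} \<inter> N)" by auto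
  ultimately have "negligible (h ` {a..b})" by (simp only: negligible_Un_eq)
  moreover have "{min (h a) (h c)..max (h a) (h c)} \<subseteq> h ` {a..b}"
  proof (rule connected_contains_Icc)
    show "connected (h ` {a..b})"
      by (rule connected_continuous_image[OF abs_continuous_on_imp_continuous_on[OF ac]]) simp
  qed (use c in \<open>auto simp: min_def max_def\<close>)
  ultimately have "negligible {min (h a) (h c)..max (h a) (h c)}"
    using negligible_subset by blast
  then have "\<not> min (h a) (h c) < max (h a) (h c)"
    using negligible_interval(1)[of "min (h a) (h c)" "max (h a) (h c)"]
    by (simp add: cbox_interval box_real)
  then show ?thesis
    by linarith
qed

lemma integrator_chain_vanishes:
  fixes Q :: "nat \<Rightarrow> real \<Rightarrow> real"
  assumes ac: "\<And>i. i < r \<Longrightarrow> abs_continuous_on {a..b} (Q i)"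
    and init: "\<And>i. i < r \<Longrightarrow> Q i a = 0"
    and deriv: "\<And>i. i < r \<Longrightarrow> AE s in lebesgue. s \<in> {a..b} \<longrightarrow>
      (Q i has_vector_derivative (if i + 1 < r then Q (Suc i) s else 0)) (at s within {a..b})"
    and "i < r" "t \<in> {a..b}"
  shows "Q i t = 0"
proof -
  have vanishes: "Q i t = 0"
    if "i < r" "t \<in> {a..b}"
      and "AE s in lebesgue. s \<in> {a..b} \<longrightarrow> (Q i has_vector_derivative 0) (at s within {a..b})"
    for i t
    using abs_continuous_on_AE_deriv_zero_constant[OF ac that(3,2)] init that(1) by simp
  have "\<forall>t\<in>{a..b}. Q i t = 0" if "i \<le> r - 1" for i
    using that
  proof (induction i rule: inc_induct)
    case base
    show ?case
      using deriv[of "r - 1"] assms(4) by (auto intro!: vanishes)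
  next
    case (step i)
    have "AE s in lebesgue. s \<in> {a..b} \<longrightarrow> (Q i has_vector_derivative 0) (at s within {a..b})"
      by (rule AE_mp[OF deriv[of i]]) (use step in \<open>auto intro!: AE_I2\<close>)
    then show ?case
      using step by (auto intro!: vanishes)
  qed
  then show ?thesis
    using assms(4,5) by simp
qed

section \<open>Finite-order differentiability on a set\<close>

text \<open>The hypothesis of \<open>frechet_derivative_unique_within\<close>: on such a set,
  \<open>frechet_derivative h (at p within S)\<close> is the derivative of \<open>h\<close> within \<open>S\<close>.\<close>
definition unique_derivatives_on :: "'a::euclidean_space set \<Rightarrow> bool" where
  "unique_derivatives_on S \<longleftrightarrow> (\<forall>x\<in>S. \<forall>i\<in>Basis. \<forall>e>0. \<exists>d. 0 < \<bar>d\<bar> \<and> \<bar>d\<bar> < e \<and> x + d *\<^sub>R i \<in> S)"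

lemma frechet_derivative_within_eq:
  assumes "unique_derivatives_on S" "x \<in> S" "(f has_derivative f') (at x within S)"
  shows "frechet_derivative f (at x within S) = f'"
proof -
  have "(f has_derivative frechet_derivative f (at x within S)) (at x within S)"
    using assms(3) frechet_derivative_works differentiableI by blast
  then show ?thesis
    by (rule frechet_derivative_unique_within[OF _ assms(3)])
       (use assms(1,2) in \<open>auto simp: unique_derivatives_on_def\<close>)
qed

lemma unique_derivatives_on_dom_set: "unique_derivatives_on (dom_set t0)"
  unfolding unique_derivatives_on_def
proof (intro ballI allI impI)
  fix x i :: "real \<times> (real^'n)" and e :: real
  assume "x \<in> dom_set t0" "i \<in> Basis" "e > 0"
  then have "t0 \<le> fst x + (e / 2) * fst i"
    by (auto simp: dom_set_def Basis_prod_def)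
  then show "\<exists>d. 0 < \<bar>d\<bar> \<and> \<bar>d\<bar> < e \<and> x + d *\<^sub>R i \<in> dom_set t0"
    using \<open>e > 0\<close> by (intro exI[of _ "e / 2"]) (auto simp: dom_set_def mem_Times_iff)
qed

text \<open>A finite-order counterpart of the coinductive \<open>smooth_on\<close>, so that closure
  properties can be proved by induction on the order.\<close>
fun Ck_on :: "nat \<Rightarrow> 'a::euclidean_space set \<Rightarrow> ('a \<Rightarrow> 'b::real_normed_vector) \<Rightarrow> bool" where
  "Ck_on 0 S h \<longleftrightarrow> continuous_on S h"
| "Ck_on (Suc k) S h \<longleftrightarrow> (\<forall>p\<in>S. h differentiable (at p within S))
     \<and> (\<forall>v. Ck_on k S (\<lambda>p. frechet_derivative h (at p within S) v))"

lemma Ck_on_has_derivative: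
  "Ck_on (Suc k) S h \<Longrightarrow> p \<in> S \<Longrightarrow> (h has_derivative frechet_derivative h (at p within S)) (at p within S)"
  using frechet_derivative_works by auto

lemma Ck_on_SucD: "Ck_on (Suc k) S h \<Longrightarrow> Ck_on k S h"
  by (induction k arbitrary: h)
     (auto simp: continuous_on_eq_continuous_within differentiable_imp_continuous_within)

lemma smooth_on_imp_Ck_on: "smooth_on S h \<Longrightarrow> Ck_on k S h"
proof (induction k arbitrary: h)
  case 0
  then show ?case
    by (cases rule: smooth_on.cases)
       (auto simp: continuous_on_eq_continuous_within differentiable_imp_continuous_within)
next
  case (Suc k)
  from Suc.prems show ?case
    by (cases rule: smooth_on.cases) (auto simp: Suc.IH)
qed

lemma Ck_on_cong:
  assumes S: "unique_derivatives_on S" and "Ck_on k S h" "\<And>p. p \<in> S \<Longrightarrow> h p = h' p"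
  shows "Ck_on k S h'"
  using assms(2,3)
proof (induction k arbitrary: h h')
  case 0
  then show ?case using continuous_on_cong by (metis Ck_on.simps(1))
next
  case (Suc k)
  have h': "(h' has_derivative frechet_derivative h (at p within S)) (at p within S)" if "p \<in> S" for p
    using has_derivative_transform[OF that _ Ck_on_has_derivative[OF Suc.prems(1) that]] Suc.prems(2)
    by metis
  have eq: "frechet_derivative h (at p within S) = frechet_derivative h' (at p within S)"
    if "p \<in> S" for p
    using frechet_derivative_within_eq[OF S that h'[OF that]] by simp
  show ?case
  proof (simp only: Ck_on.simps, intro conjI ballI allI)
    show "h' differentiable (at p within S)" if "p \<in> S" for p
      using h'[OF that] by (auto simp: differentiable_def)
    fix v
    have "Ck_on k S (\<lambda>p. frechet_derivative h (at p within S) v)"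
      using Suc.prems(1) by simp
    then show "Ck_on k S (\<lambda>p. frechet_derivative h' (at p within S) v)"
      by (rule Suc.IH) (simp add: eq)
  qed
qed

lemma Ck_on_SucI:
  assumes S: "unique_derivatives_on S"
    and h: "\<And>p. p \<in> S \<Longrightarrow> (h has_derivative h' p) (at p within S)"
    and h': "\<And>v. Ck_on k S (\<lambda>p. h' p v)"
  shows "Ck_on (Suc k) S h"
proof (simp only: Ck_on.simps, intro conjI ballI allI)
  show "h differentiable (at p within S)" if "p \<in> S" for p
    using h[OF that] by (auto simp: differentiable_def)
  show "Ck_on k S (\<lambda>p. frechet_derivative h (at p within S) v)" for v
    by (rule Ck_on_cong[OF S h'[of v]]) (simp add: frechet_derivative_within_eq[OF S _ h])
qed

lemma Ck_on_bounded_linear: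
  assumes S: "unique_derivatives_on S" and L: "bounded_linear L" and "Ck_on k S h"
  shows "Ck_on k S (\<lambda>p. L (h p))"
  using assms(3)
proof (induction k arbitrary: h)
  case 0
  then show ?case
    using L by (auto intro: continuous_on_compose2[of UNIV L] linear_continuous_on)
next
  case (Suc k)
  show ?case
    by (rule Ck_on_SucI[OF S bounded_linear.has_derivative[OF L Ck_on_has_derivative[OF Suc.prems]]])
       (use Suc in auto)
qed

lemma Ck_on_const: "unique_derivatives_on S \<Longrightarrow> Ck_on k S (\<lambda>p. c)"
proof (induction k arbitrary: c)
  case (Suc k)
  show ?case
    by (rule Ck_on_SucI[OF Suc.prems has_derivative_const]) (use Suc in auto)
qed simp

lemma Ck_on_add:
  fixes f g :: "'a::euclidean_space \<Rightarrow> 'b::real_normed_vector"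
  assumes S: "unique_derivatives_on S" and "Ck_on k S f" "Ck_on k S g"
  shows "Ck_on k S (\<lambda>p. f p + g p)"
  using assms(2,3)
proof (induction k arbitrary: f g)
  case 0
  then show ?case by (auto intro: continuous_on_add)
next
  case (Suc k)
  show ?case
    by (rule Ck_on_SucI[OF S has_derivative_add[OF Ck_on_has_derivative Ck_on_has_derivative]])
       (use Suc in auto)
qed

lemma Ck_on_sum:
  fixes f :: "'i \<Rightarrow> 'a::euclidean_space \<Rightarrow> 'b::real_normed_vector"
  assumes S: "unique_derivatives_on S" and "\<And>i. i \<in> A \<Longrightarrow> Ck_on k S (f i)"
  shows "Ck_on k S (\<lambda>p. \<Sum>i\<in>A. f i p)"
  using assms(2)
  by (induction A rule: infinite_finite_induct) (simp_all add: Ck_on_const Ck_on_add S)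

lemma Ck_on_mult:
  fixes f g :: "'a::euclidean_space \<Rightarrow> real"
  assumes S: "unique_derivatives_on S" and "Ck_on k S f" "Ck_on k S g"
  shows "Ck_on k S (\<lambda>p. f p * g p)"
  using assms(2,3)
proof (induction k arbitrary: f g)
  case 0
  then show ?case by (auto intro: continuous_on_mult)
next
  case (Suc k)
  have f: "Ck_on k S f" and g: "Ck_on k S g"
    using Suc.prems Ck_on_SucD by blast+
  have Df: "Ck_on k S (\<lambda>p. frechet_derivative f (at p within S) v)"
    and Dg: "Ck_on k S (\<lambda>p. frechet_derivative g (at p within S) v)" for v
    using Suc.prems by simp_all
  show ?case
  proof (rule Ck_on_SucI[OF S])
    show "((\<lambda>p. f p * g p) has_derivative (\<lambda>v. f p * frechet_derivative g (at p within S) v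
        + frechet_derivative f (at p within S) v * g p)) (at p within S)" if "p \<in> S" for p
      using has_derivative_mult[OF Ck_on_has_derivative[OF Suc.prems(1) that]
          Ck_on_has_derivative[OF Suc.prems(2) that]] .
    show "Ck_on k S (\<lambda>p. f p * frechet_derivative g (at p within S) v
        + frechet_derivative f (at p within S) v * g p)" for v
      using Ck_on_add[OF S Suc.IH[OF f Dg] Suc.IH[OF Df g]] .
  qed
qed

lemma Ck_on_frechet_derivative_apply:
  fixes \<psi> :: "'a::euclidean_space \<Rightarrow> real" and V :: "'a \<Rightarrow> 'a"
  assumes S: "unique_derivatives_on S" and \<psi>: "Ck_on (Suc k) S \<psi>" and V: "Ck_on k S V"
  shows "Ck_on k S (\<lambda>p. frechet_derivative \<psi> (at p within S) (V p))"
proof -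
  have D\<psi>: "Ck_on k S (\<lambda>p. frechet_derivative \<psi> (at p within S) b)" for b
    using \<psi> by simp
  have "Ck_on k S (\<lambda>p. \<Sum>b\<in>Basis. (V p \<bullet> b) * frechet_derivative \<psi> (at p within S) b)"
    by (intro Ck_on_sum[OF S] Ck_on_mult[OF S Ck_on_bounded_linear[OF S bounded_linear_inner_left V] D\<psi>])
  moreover have "(\<Sum>b\<in>Basis. (V p \<bullet> b) * frechet_derivative \<psi> (at p within S) b)
      = frechet_derivative \<psi> (at p within S) (V p)" if "p \<in> S" for p
  proof -
    have lin: "linear (frechet_derivative \<psi> (at p within S))"
      using Ck_on_has_derivative[OF \<psi> that] has_derivative_linear by blast
    have "frechet_derivative \<psi> (at p within S) (V p)
        = frechet_derivative \<psi> (at p within S) (\<Sum>b\<in>Basis. (V p \<bullet> b) *\<^sub>R b)"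
      by (simp add: euclidean_representation)
    also have "\<dots> = (\<Sum>b\<in>Basis. (V p \<bullet> b) * frechet_derivative \<psi> (at p within S) b)"
      by (simp add: linear_sum[OF lin] linear_scale[OF lin])
    finally show ?thesis by simp
  qed
  ultimately show ?thesis by (rule Ck_on_cong[OF S])
qed

lemma Ck_on_lie_f_iter:
  fixes f :: "real \<Rightarrow> real^'n \<Rightarrow> real^'n" and \<psi> :: "real \<Rightarrow> real^'n \<Rightarrow> real"
  assumes \<psi>: "\<And>k. Ck_on k (dom_set t0) (\<lambda>p. \<psi> (fst p) (snd p))"
    and f: "\<And>k. Ck_on k (dom_set t0) (\<lambda>p. (1::real, f (fst p) (snd p)))"
  shows "Ck_on k (dom_set t0) (\<lambda>p. lie_f_iter t0 f i \<psi> (fst p) (snd p))"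
proof (induction i arbitrary: k)
  case 0
  show ?case using \<psi> by (simp add: lie_f_iter_def)
next
  case (Suc i)
  show ?case
    using Ck_on_frechet_derivative_apply[OF unique_derivatives_on_dom_set Suc.IH[of "Suc k"] f[of k]]
    by (simp add: lie_f_iter_def lie_f_def)
qed

lemma Ck_on_lie_f_iter_component:
  fixes f :: "real \<Rightarrow> real^'n \<Rightarrow> real^'n" and \<phi> :: "real \<Rightarrow> real^'n \<Rightarrow> real^'m"
  assumes f: "smooth_on (dom_set t0) (\<lambda>p. f (fst p) (snd p))"
    and \<phi>: "smooth_on (dom_set t0) (\<lambda>p. \<phi> (fst p) (snd p))"
  shows "Ck_on n (dom_set t0) (\<lambda>p. lie_f_iter t0 f i (comp_fun \<phi> k) (fst p) (snd p))"
proof (rule Ck_on_lie_f_iter)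
  show "Ck_on n (dom_set t0) (\<lambda>p. comp_fun \<phi> k (fst p) (snd p))" for n
    using Ck_on_bounded_linear[OF unique_derivatives_on_dom_set bounded_linear_vec_nth
        smooth_on_imp_Ck_on[OF \<phi>]]
    by (simp add: comp_fun_def)
  have "Ck_on n (dom_set t0) (\<lambda>p. (0::real, f (fst p) (snd p)))" for n
    by (rule Ck_on_bounded_linear[OF unique_derivatives_on_dom_set
          bounded_linear_Pair[OF bounded_linear_zero bounded_linear_ident] smooth_on_imp_Ck_on[OF f]])
  from Ck_on_add[OF unique_derivatives_on_dom_set
      Ck_on_const[OF unique_derivatives_on_dom_set, where c = "(1::real, 0::real^'n)"] this]
  show "Ck_on n (dom_set t0) (\<lambda>p. (1::real, f (fst p) (snd p)))" for n
    by (rule Ck_on_cong[OF unique_derivatives_on_dom_set]) simp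
qed

lemma Ck_on_onorm_bounded:
  fixes \<psi> :: "'a::euclidean_space \<Rightarrow> 'b::real_normed_vector"
  assumes \<psi>: "Ck_on (Suc 0) S \<psi>" and K: "compact K" "K \<subseteq> S"
  obtains M where "M > 0" "\<And>p. p \<in> K \<Longrightarrow> onorm (frechet_derivative \<psi> (at p within S)) \<le> M"
proof -
  have "continuous_on K (\<lambda>p. frechet_derivative \<psi> (at p within S) b)" for b
    using \<psi> by (auto intro: continuous_on_subset[OF _ K(2)])
  then have "continuous_on K (\<lambda>p. \<Sum>b\<in>Basis. norm (frechet_derivative \<psi> (at p within S) b))"
    by (intro continuous_intros)
  from compact_imp_bounded[OF compact_continuous_image[OF this K(1)]]
  obtain M where "M > 0"
    and M: "\<forall>y \<in> (\<lambda>p. \<Sum>b\<in>Basis. norm (frechet_derivative \<psi> (at p within S) b)) ` K. norm y \<le> M"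
    unfolding bounded_pos by blast
  have "onorm (frechet_derivative \<psi> (at p within S)) \<le> M" if "p \<in> K" for p
  proof -
    have "bounded_linear (frechet_derivative \<psi> (at p within S))"
      using Ck_on_has_derivative[OF \<psi>] that K(2) has_derivative_bounded_linear by blast
    moreover have "(\<Sum>b\<in>Basis. norm (frechet_derivative \<psi> (at p within S) b)) \<le> M"
      using M that by fastforce
    ultimately show ?thesis
      using onorm_componentwise by (blast intro: order_trans)
  qed
  with \<open>M > 0\<close> show ?thesis using that by blast
qed

lemma abs_continuous_on_compose_Ck_on:
  fixes \<psi> :: "real \<times> (real^'n) \<Rightarrow> real" and x :: "real \<Rightarrow> real^'n"
  assumes \<psi>: "Ck_on (Suc 0) (dom_set t0) \<psi>" and x: "abs_continuous_on {t0..T} x"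
  shows "abs_continuous_on {t0..T} (\<lambda>t. \<psi> (t, x t))"
proof -
  obtain R where R: "\<And>t. t \<in> {t0..T} \<Longrightarrow> norm (x t) \<le> R"
    using abs_continuous_on_bounded[OF x] by metis
  define K where "K = {t0..T} \<times> cball (0::real^'n) R"
  have "compact K" "convex K" "K \<subseteq> dom_set t0"
    by (auto simp: K_def dom_set_def compact_Times convex_Times)
  then obtain M where "M > 0"
    and M: "\<And>p. p \<in> K \<Longrightarrow> onorm (frechet_derivative \<psi> (at p within dom_set t0)) \<le> M"
    using Ck_on_onorm_bounded[OF \<psi>] by metis
  have \<psi>': "(\<psi> has_derivative frechet_derivative \<psi> (at p within dom_set t0)) (at p within K)"
    if "p \<in> K" for p
    using Ck_on_has_derivative[OF \<psi>] has_derivative_subset \<open>K \<subseteq> dom_set t0\<close> that by blast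
  show ?thesis
  proof (rule abs_continuous_on_dominated[OF x abs_continuous_on_ident, where L = M])
    fix s t assume "s \<in> {t0..T}" "t \<in> {t0..T}"
    then have "(s, x s) \<in> K" "(t, x t) \<in> K"
      using R by (auto simp: K_def)
    then have "norm (\<psi> (s, x s) - \<psi> (t, x t)) \<le> M * norm ((s, x s) - (t, x t))"
      using differentiable_bound[OF \<open>convex K\<close> \<psi>' M] by blast
    also have "\<dots> \<le> M * (norm (x s - x t) + norm (s - t))"
      using norm_Pair_le[of "s - t" "x s - x t"] \<open>M > 0\<close> by (simp add: add.commute)
    finally show "norm (\<psi> (s, x s) - \<psi> (t, x t)) \<le> M * (norm (x s - x t) + norm (s - t))" .
  qed (use \<open>M > 0\<close> in simp)
qed

section \<open>Derivatives along a trajectory of the augmented system\<close>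

lemma has_real_derivative_along_trajectory:
  fixes \<psi> :: "real \<Rightarrow> real^'n \<Rightarrow> real" and x :: "real \<Rightarrow> real^'n"
    and f :: "real \<Rightarrow> real^'n \<Rightarrow> real^'n" and g :: "real \<Rightarrow> real^'n \<Rightarrow> real^'m^'n"
  assumes \<psi>: "(\<lambda>p. \<psi> (fst p) (snd p)) differentiable (at (t, x t) within dom_set t0)"
    and x: "(x has_vector_derivative (f t (x t) + g t (x t) *v u)) (at t within {t0..T})"
    and t: "t \<in> {t0..T}"
  shows "((\<lambda>s. \<psi> s (x s)) has_real_derivative lie_f t0 f \<psi> t (x t) + lie_g t0 g \<psi> t (x t) \<bullet> u)
    (at t within {t0..T})"
proof -
  let ?D = "frechet_derivative (\<lambda>p. \<psi> (fst p) (snd p)) (at (t, x t) within dom_set t0)"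
  let ?v = "(1::real, f t (x t) + g t (x t) *v u)"
  have D: "((\<lambda>p. \<psi> (fst p) (snd p)) has_derivative ?D) (at (t, x t) within dom_set t0)"
    using \<psi> frechet_derivative_works by blast
  then have lin: "linear ?D"
    by (rule has_derivative_linear)
  have "((\<lambda>s. (s, x s)) has_derivative (\<lambda>h. h *\<^sub>R ?v)) (at t within {t0..T})"
    using has_derivative_Pair[OF has_derivative_ident x[unfolded has_vector_derivative_def]] by simp
  moreover have "((\<lambda>p. \<psi> (fst p) (snd p)) has_derivative ?D) (at (t, x t) within (\<lambda>s. (s, x s)) ` {t0..T})"
    by (rule has_derivative_subset[OF D]) (auto simp: dom_set_def)
  ultimately have "((\<lambda>s. \<psi> s (x s)) has_derivative (\<lambda>h. ?D (h *\<^sub>R ?v))) (at t within {t0..T})"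
    using has_derivative_in_compose by fastforce
  moreover have "(\<lambda>h. ?D (h *\<^sub>R ?v)) = (\<lambda>h. ?D ?v * h)"
    by (rule ext) (simp only: linear_scale[OF lin] real_scaleR_def mult.commute)
  ultimately have deriv: "((\<lambda>s. \<psi> s (x s)) has_real_derivative ?D ?v) (at t within {t0..T})"
    by (simp add: has_field_derivative_def)
  have "g t (x t) *v u = (\<Sum>j\<in>UNIV. u $ j *\<^sub>R column j (g t (x t)))"
    by (simp add: matrix_mult_sum scalar_mult_eq_scaleR)
  then have "?v = (1, f t (x t)) + (\<Sum>j\<in>UNIV. u $ j *\<^sub>R (0, column j (g t (x t))))"
    by (simp add: prod_eq_iff fst_sum snd_sum)
  then have "?D ?v = ?D (1, f t (x t)) + (\<Sum>j\<in>UNIV. u $ j * ?D (0, column j (g t (x t))))"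
    by (simp only: linear_add[OF lin] linear_sum[OF lin] linear_scale[OF lin] real_scaleR_def o_def)
  also have "\<dots> = lie_f t0 f \<psi> t (x t) + lie_g t0 g \<psi> t (x t) \<bullet> u"
    by (simp add: lie_f_def lie_g_def inner_vec_def mult.commute)
  finally show ?thesis
    using deriv by simp
qed

text \<open>If \<open>c j\<close> is the \<open>j\<close>-th derivative of a function \<open>z\<close>, then \<open>leibniz_sq i c\<close> is the
  \<open>i\<close>-th derivative of \<open>z\<^sup>2 / 2\<close> (Leibniz rule).\<close>
definition leibniz_sq :: "nat \<Rightarrow> (nat \<Rightarrow> real) \<Rightarrow> real" where
  "leibniz_sq i c = (1/2) * (\<Sum>j\<le>i. real (i choose j) * c (i - j) * c j)"

lemma leibniz_sq_0: "leibniz_sq 0 c = c 0 * c 0 / 2"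
  by (simp add: leibniz_sq_def)

lemma leibniz_sq_split:
  assumes "1 \<le> i"
  shows "leibniz_sq i c = c 0 * c i + (1/2) * (\<Sum>j\<in>{1..i-1}. real (i choose j) * c (i - j) * c j)"
proof -
  obtain m where m: "i = Suc m" using assms by (cases i) auto
  have "(\<Sum>j\<le>Suc m. real (Suc m choose j) * c (Suc m - j) * c j) =
        c (Suc m) * c 0 + (\<Sum>j\<le>m. real (Suc m choose Suc j) * c (m - j) * c (Suc j))"
    by (subst sum.atMost_Suc_shift) simp
  also have "(\<Sum>j\<le>m. real (Suc m choose Suc j) * c (m - j) * c (Suc j)) =
      (\<Sum>j<m. real (Suc m choose Suc j) * c (m - j) * c (Suc j)) + c 0 * c (Suc m)"
    by (simp add: lessThan_Suc_atMost[symmetric])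
  also have "(\<Sum>j<m. real (Suc m choose Suc j) * c (m - j) * c (Suc j)) =
      (\<Sum>j\<in>{1..m}. real (Suc m choose j) * c (Suc m - j) * c j)"
  proof -
    have "{1..m} = Suc ` {..<m}" by (simp add: image_Suc_lessThan)
    then show ?thesis by (simp add: sum.reindex)
  qed
  finally show ?thesis unfolding leibniz_sq_def m by (simp add: algebra_simps)
qed

lemma leibniz_sq_cong: "(\<And>j. j \<le> i \<Longrightarrow> c j = c' j) \<Longrightarrow> leibniz_sq i c = leibniz_sq i c'"
  unfolding leibniz_sq_def by (intro arg_cong[where f = "\<lambda>z. 1/2 * z"] sum.cong) auto

lemma leibniz_sq_eq_S_sum:
  assumes "1 \<le> i" "\<And>j. j < i \<Longrightarrow> c j = zt k j"
  shows "leibniz_sq i c = c 0 * c i + S_sum zt k i"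
proof -
  have "(\<Sum>j\<in>{1..i-1}. real (i choose j) * c (i - j) * c j)
      = (\<Sum>j\<in>{1..i-1}. real (i choose j) * zt k (i - j) * zt k j)"
    using assms by (intro sum.cong) auto
  then show ?thesis
    using leibniz_sq_split[OF assms(1), of c] by (simp add: S_sum_def)
qed

lemma binomial_product_sum_Suc:
  "(\<Sum>j\<le>i. real (i choose j) * (b (Suc i - j) * b j + b (i - j) * b (Suc j))) =
   (\<Sum>j\<le>Suc i. real (Suc i choose j) * b (Suc i - j) * b j)"
proof -
  have shift: "(\<Sum>j\<le>i. real (i choose j) * b (Suc i - j) * b j) =
        b (Suc i) * b 0 + (\<Sum>j\<le>i. real (i choose Suc j) * b (i - j) * b (Suc j))"
  proof -
    have "(\<Sum>j\<le>i. real (i choose j) * b (Suc i - j) * b j) = (\<Sum>j\<le>Suc i. real (i choose j) * b (Suc i - j) * b j)"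
      by simp
    also have "\<dots> = b (Suc i) * b 0 + (\<Sum>j\<le>i. real (i choose Suc j) * b (Suc i - Suc j) * b (Suc j))"
      by (subst sum.atMost_Suc_shift) simp
    finally show ?thesis by simp
  qed
  have pascal: "(\<Sum>j\<le>Suc i. real (Suc i choose j) * b (Suc i - j) * b j) =
       b (Suc i) * b 0 + (\<Sum>j\<le>i. (real (i choose j) + real (i choose Suc j)) * b (i - j) * b (Suc j))"
    by (subst sum.atMost_Suc_shift) simp
  have split_lhs: "(\<Sum>j\<le>i. real (i choose j) * (b (Suc i - j) * b j + b (i - j) * b (Suc j))) =
     (\<Sum>j\<le>i. real (i choose j) * b (Suc i - j) * b j) + (\<Sum>j\<le>i. real (i choose j) * b (i - j) * b (Suc j))"
    by (simp add: distrib_left sum.distrib mult.assoc)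
  have split_pascal: "(\<Sum>j\<le>i. (real (i choose j) + real (i choose Suc j)) * b (i - j) * b (Suc j)) =
     (\<Sum>j\<le>i. real (i choose j) * b (i - j) * b (Suc j)) + (\<Sum>j\<le>i. real (i choose Suc j) * b (i - j) * b (Suc j))"
    by (simp add: distrib_right sum.distrib)
  show ?thesis unfolding split_lhs pascal split_pascal shift by simp
qed

lemma has_real_derivative_leibniz_sq:
  assumes deriv: "\<And>j. j \<le> i \<Longrightarrow> ((\<lambda>s. z s j) has_real_derivative c (Suc j)) (at t within X)"
    and val: "\<And>j. j \<le> i \<Longrightarrow> z t j = c j"
  shows "((\<lambda>s. leibniz_sq i (z s)) has_real_derivative leibniz_sq (Suc i) c) (at t within X)"
proof -
  have "((\<lambda>s. leibniz_sq i (z s)) has_real_derivative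
      (1/2) * (\<Sum>j\<le>i. real (i choose j) * (c (Suc (i - j)) * z t j + z t (i - j) * c (Suc j)))) (at t within X)"
  proof -
    have dj: "((\<lambda>s. real (i choose j) * (z s (i - j) * z s j)) has_real_derivative
        real (i choose j) * (c (Suc (i - j)) * z t j + z t (i - j) * c (Suc j))) (at t within X)"
      if "j \<in> {..i}" for j
    proof -
      have "j \<le> i" "i - j \<le> i" using that by auto
      from DERIV_mult'[OF deriv[OF this(2)] deriv[OF this(1)]]
      have "((\<lambda>s. z s (i - j) * z s j) has_real_derivative
          z t (i - j) * c (Suc j) + c (Suc (i - j)) * z t j) (at t within X)" .
      from DERIV_cmult[OF this, of "real (i choose j)"] show ?thesis by (simp add: algebra_simps)
    qed
    have "((\<lambda>s. (1/2) * (\<Sum>j\<le>i. real (i choose j) * (z s (i - j) * z s j))) has_real_derivative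
      (1/2) * (\<Sum>j\<le>i. real (i choose j) * (c (Suc (i - j)) * z t j + z t (i - j) * c (Suc j)))) (at t within X)"
      by (intro DERIV_cmult DERIV_sum dj)
    then show ?thesis by (simp add: leibniz_sq_def mult.assoc)
  qed
  moreover have "(\<Sum>j\<le>i. real (i choose j) * (c (Suc (i - j)) * z t j + z t (i - j) * c (Suc j))) =
      (\<Sum>j\<le>i. real (i choose j) * (c (Suc i - j) * c j + c (i - j) * c (Suc j)))"
    by (intro sum.cong refl) (simp add: val Suc_diff_le)
  ultimately show ?thesis by (simp add: leibniz_sq_def binomial_product_sum_Suc)
qed

lemma has_real_derivative_leibniz_sq_chain:
  assumes "i < r"
    and z': "\<And>j. j + 1 < r \<Longrightarrow> ((\<lambda>v. z v j) has_real_derivative z s (j + 1)) (at s within X)"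
    and z'_top: "((\<lambda>v. z v (r - 1)) has_real_derivative w) (at s within X)"
  shows "((\<lambda>v. leibniz_sq i (z v)) has_real_derivative
      leibniz_sq (Suc i) (\<lambda>j. if j < r then z s j else w)) (at s within X)"
proof (rule has_real_derivative_leibniz_sq)
  fix j assume "j \<le> i"
  then show "z s j = (if j < r then z s j else w)"
    using \<open>i < r\<close> by simp
  show "((\<lambda>v. z v j) has_real_derivative (if Suc j < r then z s (Suc j) else w)) (at s within X)"
  proof (cases "j + 1 < r")
    case True
    then show ?thesis using z' by simp
  next
    case False
    then have "j = r - 1" using \<open>j \<le> i\<close> \<open>i < r\<close> by simp
    then show ?thesis using z'_top False by simp
  qed
qed

lemma lie_g_dot_aug_control:
  assumes "invertible (Omega_g t0 f g \<phi> \<rho> t y)"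
  shows "lie_g t0 g (lie_f_iter t0 f (\<rho> k - 1) (comp_fun \<phi> k)) t y \<bullet> aug_control t0 f g \<phi> \<rho> t y zt w
    = - (S_sum zt k (\<rho> k) + lie_f_iter t0 f (\<rho> k) (comp_fun \<phi> k) t y + zt k 0 * w $ k)"
proof -
  let ?\<Omega> = "Omega_g t0 f g \<phi> \<rho> t y"
  let ?v = "Omega_f t0 f \<phi> \<rho> t y zt + D_mult zt w"
  have "?\<Omega> ** matrix_inv ?\<Omega> = mat 1"
    using assms unfolding invertible_def matrix_inv_def by (rule someI_ex[THEN conjunct1])
  then have "?\<Omega> *v (matrix_inv ?\<Omega> *v ?v) = ?v"
    by (simp add: matrix_vector_mul_assoc)
  then have "?\<Omega> $ k \<bullet> (matrix_inv ?\<Omega> *v ?v) = ?v $ k"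
    by (metis matrix_vector_mul_component)
  then show ?thesis
    by (simp add: aug_control_def Omega_g_def Omega_f_def D_mult_def inner_minus_right)
qed

text \<open>The \<open>i\<close>-th time derivative of \<open>\<phi>\<^sub>k + z\<^sub>k\<^sup>2 / 2\<close> along the augmented system.\<close>
definition aug_residual :: "real \<Rightarrow> (real \<Rightarrow> real^'n \<Rightarrow> real^'n) \<Rightarrow> (real \<Rightarrow> real^'n \<Rightarrow> real^'m)
    \<Rightarrow> (real \<Rightarrow> real^'n) \<Rightarrow> (real \<Rightarrow> 'm \<Rightarrow> nat \<Rightarrow> real) \<Rightarrow> 'm \<Rightarrow> nat \<Rightarrow> real \<Rightarrow> real" where
  "aug_residual t0 f \<phi> x zt k i t = lie_f_iter t0 f i (comp_fun \<phi> k) t (x t) + leibniz_sq i (zt t k)"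

lemma abs_continuous_on_aug_residual:
  assumes f: "smooth_on (dom_set t0) (\<lambda>p. f (fst p) (snd p))"
    and \<phi>: "smooth_on (dom_set t0) (\<lambda>p. \<phi> (fst p) (snd p))"
    and sol: "aug_solution t0 T f g \<phi> \<rho> x0 w x zt" and "i < \<rho> k"
  shows "abs_continuous_on {t0..T} (aug_residual t0 f \<phi> x zt k i)"
proof -
  have x: "abs_continuous_on {t0..T} x"
    and z: "\<And>j. j < \<rho> k \<Longrightarrow> abs_continuous_on {t0..T} (\<lambda>s. zt s k j)"
    using sol by (auto simp: aug_solution_def)
  have "abs_continuous_on {t0..T} (\<lambda>s. lie_f_iter t0 f i (comp_fun \<phi> k) s (x s))"
    using abs_continuous_on_compose_Ck_on[OF Ck_on_lie_f_iter_component[OF f \<phi>] x] by simp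
  moreover have "abs_continuous_on {t0..T} (\<lambda>s. leibniz_sq i (zt s k))"
    unfolding leibniz_sq_def using \<open>i < \<rho> k\<close>
    by (intro abs_continuous_on_mult abs_continuous_on_const abs_continuous_on_sum z) auto
  ultimately show ?thesis
    unfolding aug_residual_def by (rule abs_continuous_on_add)
qed

lemma aug_residual_initial:
  assumes sol: "aug_solution t0 T f g \<phi> \<rho> x0 w x zt" and neg: "\<phi> t0 x0 $ k < 0" and "i < \<rho> k"
  shows "aug_residual t0 f \<phi> x zt k i t0 = 0"
proof -
  have x0: "x t0 = x0" and z0: "zt t0 k 0 = sqrt (- 2 * \<phi> t0 x0 $ k)"
    and zi: "\<And>i. 1 \<le> i \<Longrightarrow> i < \<rho> k \<Longrightarrow> zt t0 k i
      = - (lie_f_iter t0 f i (comp_fun \<phi> k) t0 x0 + S_sum (zt t0) k i) / zt t0 k 0"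
    using sol by (auto simp: aug_solution_def)
  have "zt t0 k 0 > 0" using neg z0 by simp
  show ?thesis
  proof (cases "i = 0")
    case True
    have "zt t0 k 0 * zt t0 k 0 = - 2 * \<phi> t0 x0 $ k"
      using neg by (simp add: z0)
    then show ?thesis
      using True by (simp add: aug_residual_def leibniz_sq_0 x0 lie_f_iter_def comp_fun_def)
  next
    case False
    then show ?thesis
      using zi[of i] \<open>i < \<rho> k\<close> \<open>zt t0 k 0 > 0\<close> leibniz_sq_eq_S_sum[of i "zt t0 k" "zt t0" k]
      by (simp add: aug_residual_def x0)
  qed
qed

lemma aug_residual_has_real_derivative:
  fixes f :: "real \<Rightarrow> real^'n \<Rightarrow> real^'n" and g :: "real \<Rightarrow> real^'n \<Rightarrow> real^'m^'n"
    and \<phi> :: "real \<Rightarrow> real^'n \<Rightarrow> real^'m"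
  assumes f: "smooth_on (dom_set t0) (\<lambda>p. f (fst p) (snd p))"
    and \<phi>: "smooth_on (dom_set t0) (\<lambda>p. \<phi> (fst p) (snd p))"
    and reldeg: "has_relative_degree t0 f g \<phi> \<rho>"
    and inv: "invertible (Omega_g t0 f g \<phi> \<rho> s (x s))"
    and s: "s \<in> {t0..T}" and i: "i < \<rho> k"
    and x': "(x has_vector_derivative
      (f s (x s) + g s (x s) *v aug_control t0 f g \<phi> \<rho> s (x s) (zt s) w)) (at s within {t0..T})"
    and z': "\<And>j. j + 1 < \<rho> k \<Longrightarrow>
      ((\<lambda>v. zt v k j) has_real_derivative zt s k (j + 1)) (at s within {t0..T})"
    and z'_top: "((\<lambda>v. zt v k (\<rho> k - 1)) has_real_derivative w $ k) (at s within {t0..T})"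
  shows "(aug_residual t0 f \<phi> x zt k i has_real_derivative
      (if i + 1 < \<rho> k then aug_residual t0 f \<phi> x zt k (Suc i) s else 0)) (at s within {t0..T})"
proof -
  define \<psi> where "\<psi> j = lie_f_iter t0 f j (comp_fun \<phi> k)" for j
  define c where "c j = (if j < \<rho> k then zt s k j else w $ k)" for j
  let ?u = "aug_control t0 f g \<phi> \<rho> s (x s) (zt s) w"
  have "(\<lambda>p. \<psi> i (fst p) (snd p)) differentiable (at (s, x s) within dom_set t0)"
    using Ck_on_lie_f_iter_component[OF f \<phi>, of "Suc 0"] s by (auto simp: \<psi>_def dom_set_def)
  from has_real_derivative_along_trajectory
    [where \<psi> = "\<psi> i" and x = x and f = f and g = g and t = s, OF this x' s]
  have d\<psi>: "((\<lambda>v. \<psi> i v (x v)) has_real_derivative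
      lie_f t0 f (\<psi> i) s (x s) + lie_g t0 g (\<psi> i) s (x s) \<bullet> ?u) (at s within {t0..T})" .
  have dL: "((\<lambda>v. leibniz_sq i (zt v k)) has_real_derivative leibniz_sq (Suc i) c) (at s within {t0..T})"
    unfolding c_def by (rule has_real_derivative_leibniz_sq_chain[OF i z' z'_top])
  have \<psi>_Suc: "lie_f t0 f (\<psi> i) = \<psi> (Suc i)"
    by (simp add: \<psi>_def lie_f_iter_def)
  have residual: "aug_residual t0 f \<phi> x zt k j = (\<lambda>v. \<psi> j v (x v) + leibniz_sq j (zt v k))" for j
    by (simp add: aug_residual_def \<psi>_def fun_eq_iff)
  note d_residual = DERIV_add[OF d\<psi> dL, folded residual, unfolded \<psi>_Suc]
  show ?thesis
  proof (cases "i + 1 < \<rho> k")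
    case True
    have "lie_g t0 g (\<psi> i) s (x s) = 0"
      using reldeg True s by (auto simp: has_relative_degree_def dom_set_def \<psi>_def)
    moreover have "leibniz_sq (Suc i) c = leibniz_sq (Suc i) (zt s k)"
      using True by (intro leibniz_sq_cong) (simp add: c_def)
    ultimately show ?thesis
      using d_residual True by (simp add: residual)
  next
    case False
    then have top: "i = \<rho> k - 1" "Suc i = \<rho> k" using i by auto
    have "lie_g t0 g (\<psi> i) s (x s) \<bullet> ?u = - (S_sum (zt s) k (\<rho> k) + \<psi> (\<rho> k) s (x s) + zt s k 0 * w $ k)"
      using lie_g_dot_aug_control[OF inv] by (simp add: \<psi>_def top(1))
    moreover have "leibniz_sq (Suc i) c = zt s k 0 * w $ k + S_sum (zt s) k (\<rho> k)"
      using leibniz_sq_eq_S_sum[of "\<rho> k" c "zt s" k] top by (simp add: c_def)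
    ultimately show ?thesis
      using d_residual False top by simp
  qed
qed

lemma aug_residual_AE_has_vector_derivative:
  assumes f: "smooth_on (dom_set t0) (\<lambda>p. f (fst p) (snd p))"
    and \<phi>: "smooth_on (dom_set t0) (\<lambda>p. \<phi> (fst p) (snd p))"
    and reldeg: "has_relative_degree t0 f g \<phi> \<rho>"
    and inv: "\<forall>(t, y) \<in> dom_set t0. invertible (Omega_g t0 f g \<phi> \<rho> t y)"
    and sol: "aug_solution t0 T f g \<phi> \<rho> x0 w x zt" and i: "i < \<rho> k"
  shows "AE s in lebesgue. s \<in> {t0..T} \<longrightarrow> (aug_residual t0 f \<phi> x zt k i has_vector_derivative
      (if i + 1 < \<rho> k then aug_residual t0 f \<phi> x zt k (Suc i) s else 0)) (at s within {t0..T})"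
proof -
  have x': "AE s in lebesgue. s \<in> {t0..T} \<longrightarrow> (x has_vector_derivative (f s (x s)
      + g s (x s) *v aug_control t0 f g \<phi> \<rho> s (x s) (zt s) (w s))) (at s within {t0..T})"
    and z'_top: "AE s in lebesgue. s \<in> {t0..T} \<longrightarrow>
      ((\<lambda>v. zt v k (\<rho> k - 1)) has_vector_derivative w s $ k) (at s within {t0..T})"
    using sol by (auto simp: aug_solution_def)
  have "AE s in lebesgue. \<forall>j\<in>{..<\<rho> k}. j + 1 < \<rho> k \<longrightarrow> s \<in> {t0..T} \<longrightarrow>
      ((\<lambda>v. zt v k j) has_vector_derivative zt s k (j + 1)) (at s within {t0..T})"
  proof (rule AE_finite_allI)
    fix j
    show "AE s in lebesgue. j + 1 < \<rho> k \<longrightarrow> s \<in> {t0..T} \<longrightarrow>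
        ((\<lambda>v. zt v k j) has_vector_derivative zt s k (j + 1)) (at s within {t0..T})"
      using sol by (cases "j + 1 < \<rho> k") (auto simp: aug_solution_def)
  qed simp
  with x' z'_top show ?thesis
  proof eventually_elim
    case (elim s)
    show ?case
    proof
      assume s: "s \<in> {t0..T}"
      have "invertible (Omega_g t0 f g \<phi> \<rho> s (x s))"
        using inv s by (auto simp: dom_set_def)
      from aug_residual_has_real_derivative
        [where x = x and zt = zt and w = "w s" and f = f and g = g and s = s, OF f \<phi> reldeg this s i]
      show "(aug_residual t0 f \<phi> x zt k i has_vector_derivative
          (if i + 1 < \<rho> k then aug_residual t0 f \<phi> x zt k (Suc i) s else 0)) (at s within {t0..T})"
        using elim s by (simp add: has_real_derivative_iff_has_vector_derivative)
    qed
  qed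
qed

theorem mainTheorem3:
  fixes f :: "real \<Rightarrow> real^'n \<Rightarrow> real^'n"
    and g :: "real \<Rightarrow> real^'n \<Rightarrow> real^'m^'n"
    and \<phi> :: "real \<Rightarrow> real^'n \<Rightarrow> real^'m"
    and \<rho> :: "'m \<Rightarrow> nat"
    and t0 T \<beta> :: real
    and x0 :: "real^'n"
    and \<xi> :: "real \<Rightarrow> real^'m"
    and x :: "real \<Rightarrow> real^'n"
    and zt :: "real \<Rightarrow> 'm \<Rightarrow> nat \<Rightarrow> real"
  assumes f_smooth: "smooth_on (dom_set t0) (\<lambda>p. f (fst p) (snd p))"
    and g_smooth: "smooth_on (dom_set t0) (\<lambda>p. g (fst p) (snd p))"
    and phi_smooth: "smooth_on (dom_set t0) (\<lambda>p. \<phi> (fst p) (snd p))"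
    and reldeg: "has_relative_degree t0 f g \<phi> \<rho>"
    and Omega_inv: "\<forall>(t, y) \<in> dom_set t0. invertible (Omega_g t0 f g \<phi> \<rho> t y)"
    and init_neg: "\<forall>k. \<phi> t0 x0 $ k < 0"
    and beta_pos: "\<beta> > 0"
    and T_gt: "T > t0"
    and xi_meas: "\<xi> measurable_on {t0..T}"
    and sol: "aug_solution t0 T f g \<phi> \<rho> x0 (\<lambda>t. sat \<beta> (\<xi> t)) x zt"
  shows "\<forall>t \<in> {t0..T}. \<forall>k. \<phi> t (x t) $ k \<le> 0"
proof (intro ballI allI)
  fix t k assume "t \<in> {t0..T}"
  have "0 < \<rho> k"
    using reldeg by (simp add: has_relative_degree_def Suc_le_eq)
  have "aug_residual t0 f \<phi> x zt k 0 t = 0"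
  proof (rule integrator_chain_vanishes[where Q = "aug_residual t0 f \<phi> x zt k" and r = "\<rho> k"])
    show "abs_continuous_on {t0..T} (aug_residual t0 f \<phi> x zt k i)" if "i < \<rho> k" for i
      using abs_continuous_on_aug_residual[OF f_smooth phi_smooth sol that] .
    show "aug_residual t0 f \<phi> x zt k i t0 = 0" if "i < \<rho> k" for i
      using aug_residual_initial[OF sol init_neg[rule_format] that] .
    show "AE s in lebesgue. s \<in> {t0..T} \<longrightarrow> (aug_residual t0 f \<phi> x zt k i has_vector_derivative
        (if i + 1 < \<rho> k then aug_residual t0 f \<phi> x zt k (Suc i) s else 0)) (at s within {t0..T})"
      if "i < \<rho> k" for i
      using aug_residual_AE_has_vector_derivative[OF f_smooth phi_smooth reldeg Omega_inv sol that] .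
  qed (use \<open>0 < \<rho> k\<close> \<open>t \<in> {t0..T}\<close> in auto)
  then have "\<phi> t (x t) $ k = - (zt t k 0)\<^sup>2 / 2"
    by (simp add: aug_residual_def leibniz_sq_0 lie_f_iter_def comp_fun_def power2_eq_square)
  then show "\<phi> t (x t) $ k \<le> 0"
    by simp
qed

end
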